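(* Let $s\in\mathbb N$, $N\ge1$, and let $A_s,B_s>0$ be constants such that for all $N'\ge1$ and $r'\ge2$, if $\boldsymbol k_1,\dots,\boldsymbol k_{r'}$ are i.i.d. uniform on $Q_{N'}$ then $\Pr(\oplus_{i=1}^{r'}\boldsymbol k_i\in Q_{N'})\le A_s^{r'}N'^{r'/4}r'^{-B_s\sqrt{N'}}$. Let $I=\{V\subseteq Q_N:\mathrm{rank}(V)<|V|\}$, $I^*=\{V\in I:\text{every proper subset }W\subsetneq V\text{ has full rank}\}$, and $I^*_r=\{V\in I^*:|V|=r\}$. Then for all $r\ge2$, $$|I^*_{r+1}|\le\frac{|Q_N|^r}{(r+1)!}A_s^rN^{r/4}r^{-B_s\sqrt N}.$$
   Context: For $k\in\mathbb N_0$, $k=\sum_{\ell\ge1}a_\ell2^{\ell-1}$, $\kappa=\{\ell:a_\ell=1\}$; for $\boldsymbol k\in\mathbb N_0^s$ with digit sets $\kappa_j$, $\|\boldsymbol\kappa\|_1=\sum_j\sum_{\ell\in\kappa_j}\ell$; $Q_N=\{\boldsymbol k\in\mathbb N_0^s\setminus\{\boldsymbol0\}:\|\boldsymbol\kappa\|_1\le N\}$. $\oplus$ is componentwise bitwise XOR on $\mathbb N_0^s$, making it an $\mathbb F_2$-vector space; the rank of a finite subset $V$ is the size of its largest linearly independent subset, and $V$ has full rank if $\mathrm{rank}(V)=|V|$. *)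

theory Defs
  imports Complex_Main
begin

text \<open>Vectors in N_0^s are represented as functions nat => nat vanishing outside {..<s}.\<close>

definition vxor :: "(nat \<Rightarrow> nat) \<Rightarrow> (nat \<Rightarrow> nat) \<Rightarrow> (nat \<Rightarrow> nat)" where
  "vxor a b = (\<lambda>j. xor (a j) (b j))"

definition vzero :: "nat \<Rightarrow> nat" where
  "vzero = (\<lambda>_. 0)"

definition digits :: "nat \<Rightarrow> nat set" where
  "digits k = {l. l \<ge> 1 \<and> bit k (l - 1)}"

definition wt :: "nat \<Rightarrow> (nat \<Rightarrow> nat) \<Rightarrow> nat" where
  "wt s k = (\<Sum>j<s. \<Sum>l\<in>digits (k j). l)"

definition Q :: "nat \<Rightarrow> nat \<Rightarrow> (nat \<Rightarrow> nat) set" where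
  "Q s N = {k. (\<forall>j\<ge>s. k j = 0) \<and> k \<noteq> vzero \<and> wt s k \<le> N}"

definition xsum :: "(nat \<Rightarrow> nat) set \<Rightarrow> (nat \<Rightarrow> nat)" where
  "xsum V = Finite_Set.fold vxor vzero V"

definition xsum_list :: "(nat \<Rightarrow> nat) list \<Rightarrow> (nat \<Rightarrow> nat)" where
  "xsum_list ks = foldr vxor ks vzero"

text \<open>Linear independence over F_2: no nontrivial F_2-combination (= nonempty subset sum) vanishes.\<close>
definition lin_indep :: "(nat \<Rightarrow> nat) set \<Rightarrow> bool" where
  "lin_indep V \<longleftrightarrow> (\<forall>W\<subseteq>V. W \<noteq> {} \<longrightarrow> xsum W \<noteq> vzero)"

definition rank :: "(nat \<Rightarrow> nat) set \<Rightarrow> nat" where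
  "rank V = Max (card ` {W. W \<subseteq> V \<and> lin_indep W})"

definition full_rank :: "(nat \<Rightarrow> nat) set \<Rightarrow> bool" where
  "full_rank V \<longleftrightarrow> rank V = card V"

definition Idep :: "nat \<Rightarrow> nat \<Rightarrow> (nat \<Rightarrow> nat) set set" where
  "Idep s N = {V. V \<subseteq> Q s N \<and> rank V < card V}"

definition Istar :: "nat \<Rightarrow> nat \<Rightarrow> (nat \<Rightarrow> nat) set set" where
  "Istar s N = {V \<in> Idep s N. \<forall>W. W \<subset> V \<longrightarrow> full_rank W}"

definition Istar_r :: "nat \<Rightarrow> nat \<Rightarrow> nat \<Rightarrow> (nat \<Rightarrow> nat) set set" where
  "Istar_r s N r = {V \<in> Istar s N. card V = r}"

text \<open>Pr(xor of r i.i.d. uniform elements of Q_N lies in Q_N), as a uniform count over r-tuples.\<close>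
definition prob_xor_in_Q :: "nat \<Rightarrow> nat \<Rightarrow> nat \<Rightarrow> real" where
  "prob_xor_in_Q s N r =
     real (card {ks. length ks = r \<and> set ks \<subseteq> Q s N \<and> xsum_list ks \<in> Q s N})
     / real (card (Q s N)) ^ r"

end

theory Submission
  imports Defs
begin

text \<open>Every set in \<open>I\<^sup>*\<close> is minimally dependent, so its elements XOR to zero. Hence if
  \<open>V \<in> I\<^sup>*\<close> has \<open>r + 1\<close> elements, each of the \<open>(r + 1)!\<close> lists of \<open>r\<close> distinct elements of
  \<open>V\<close> is an \<open>r\<close>-tuple from \<open>Q\<^sub>N\<close> whose XOR (the missing element) again lies in \<open>Q\<^sub>N\<close>, and \<open>V\<close>
  is recovered from the tuple as its entries together with their XOR. So \<open>(r + 1)!\<close> times the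
  number of such \<open>V\<close> is at most the number of these tuples, which is \<open>|Q\<^sub>N|\<^sup>r\<close> times the
  probability bounded by the hypothesis.\<close>

lemma exp_le_if_bit_nat:
  fixes k :: nat
  assumes "bit k i"
  shows "2 ^ i \<le> k"
proof (rule ccontr)
  assume "\<not> 2 ^ i \<le> k"
  then have "k div 2 ^ i = 0" by simp
  with assms show False by (simp add: bit_iff_odd)
qed

lemma digits_subset: "digits k \<subseteq> {1..k}"
proof
  fix l assume "l \<in> digits k"
  then have l: "l \<ge> 1" "bit k (l - 1)" by (auto simp: digits_def)
  have "l - 1 < 2 ^ (l - 1)" by (rule less_exp)
  with exp_le_if_bit_nat[OF l(2)] have "l - 1 < k" by linarith
  with l(1) show "l \<in> {1..k}" by auto
qed

lemma finite_digits: "finite (digits k)"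
  using digits_subset finite_subset by blast

lemma digit_le_wt:
  assumes "j < s" and "l \<in> digits (k j)"
  shows "l \<le> wt s k"
proof -
  have "l \<le> (\<Sum>l\<in>digits (k j). l)"
    using assms(2) finite_digits by (intro member_le_sum) auto
  also have "\<dots> \<le> wt s k"
    unfolding wt_def using assms(1)
    by (intro member_le_sum[of j "{..<s}" "\<lambda>j. \<Sum>l\<in>digits (k j). l"]) auto
  finally show ?thesis .
qed

lemma Q_entry_less_exp:
  assumes "k \<in> Q s N"
  shows "k j < 2 ^ N"
proof (cases "j < s")
  case True
  have "\<not> bit (k j) i" if "i \<ge> N" for i
  proof
    assume "bit (k j) i"
    then have "Suc i \<le> wt s k"
      using True by (intro digit_le_wt) (auto simp: digits_def)
    with that assms show False by (auto simp: Q_def)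
  qed
  then have "take_bit N (k j) = k j"
    by (intro bit_eqI) (auto simp: bit_take_bit_iff not_le[symmetric])
  then show ?thesis by (simp add: take_bit_nat_eq_self_iff)
next
  case False
  with assms show ?thesis by (simp add: Q_def)
qed

lemma finite_Q: "finite (Q s N)"
proof (rule finite_subset)
  show "Q s N \<subseteq> {f. \<forall>x. (x \<in> {..<s} \<longrightarrow> f x \<in> {..<2 ^ N}) \<and> (x \<notin> {..<s} \<longrightarrow> f x = 0)}"
    using Q_entry_less_exp by (auto simp: Q_def)
  show "finite {f. \<forall>x. (x \<in> {..<s} \<longrightarrow> f x \<in> {..<(2::nat) ^ N}) \<and> (x \<notin> {..<s} \<longrightarrow> f x = 0)}"
    by (intro finite_set_of_finite_funs) auto
qed

lemma comp_fun_commute_on_vxor: "comp_fun_commute_on UNIV vxor"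
  unfolding comp_fun_commute_on_def vxor_def by (auto simp: fun_eq_iff ac_simps)

lemma xsum_insert: "finite V \<Longrightarrow> v \<notin> V \<Longrightarrow> xsum (insert v V) = vxor v (xsum V)"
  unfolding xsum_def using comp_fun_commute_on.fold_insert[OF comp_fun_commute_on_vxor] by blast

lemma xsum_list_eq_xsum_set: "distinct ks \<Longrightarrow> xsum_list ks = xsum (set ks)"
  by (induction ks) (simp_all add: xsum_list_def xsum_def[symmetric] xsum_insert, simp add: xsum_def)

lemma xor_eq_0_iff_nat: "xor (a :: nat) b = 0 \<longleftrightarrow> a = b"
  by (metis xor_self_eq xor.left_neutral xor.assoc)

lemma vxor_eq_vzero_iff: "vxor v w = vzero \<longleftrightarrow> v = w"
  by (simp add: vxor_def vzero_def fun_eq_iff xor_eq_0_iff_nat)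

lemma full_rank_iff_lin_indep:
  assumes "finite V"
  shows "full_rank V \<longleftrightarrow> lin_indep V"
proof -
  let ?C = "card ` {W. W \<subseteq> V \<and> lin_indep W}"
  have bounded: "?C \<subseteq> {..card V}"
    using assms by (auto intro: card_mono)
  then have "finite ?C" by (rule finite_subset) simp
  moreover have "card {} \<in> ?C" by (force simp: lin_indep_def)
  ultimately have "rank V \<in> ?C" unfolding rank_def by (intro Max_in) blast+
  then obtain W where W: "W \<subseteq> V" "lin_indep W" "card W = rank V" by auto
  show ?thesis
  proof
    assume "full_rank V"
    then have "W = V" using W assms card_subset_eq by (auto simp: full_rank_def)
    with W show "lin_indep V" by simp
  next
    assume "lin_indep V"
    then have "card V \<in> ?C" by blast
    with \<open>finite ?C\<close> bounded show "full_rank V"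
      unfolding full_rank_def rank_def by (intro Max_eqI) auto
  qed
qed

lemma Istar_xsum_eq_vzero:
  assumes "V \<in> Istar s N"
  shows "xsum V = vzero"
proof -
  have V: "V \<subseteq> Q s N" "\<not> full_rank V" "\<And>W. W \<subset> V \<Longrightarrow> full_rank W"
    using assms by (auto simp: Istar_def Idep_def full_rank_def)
  have fin: "finite V" using V(1) finite_Q by (rule finite_subset)
  obtain W where W: "W \<subseteq> V" "W \<noteq> {}" "xsum W = vzero"
    using V(2) full_rank_iff_lin_indep[OF fin] by (auto simp: lin_indep_def)
  have "\<not> lin_indep W" using W by (auto simp: lin_indep_def)
  then have "\<not> W \<subset> V"
    using V(3) full_rank_iff_lin_indep fin finite_subset by blast
  with W show ?thesis by auto
qed

lemma eq_insert_xsum_list_if_xsum_eq_vzero: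
  assumes "xsum V = vzero" and "finite V" and "distinct ks" and "set ks \<subseteq> V"
    and "card V = Suc (length ks)"
  shows "V = insert (xsum_list ks) (set ks)"
proof -
  have "set ks \<noteq> V" using assms(3,5) by (auto simp: distinct_card)
  then obtain v where v: "v \<in> V" "v \<notin> set ks" using assms(4) by blast
  have "card (insert v (set ks)) = card V" using v assms(3,5) by (simp add: distinct_card)
  then have V: "V = insert v (set ks)"
    using v assms(2,4) by (metis card_subset_eq insert_subset)
  then have "vxor v (xsum (set ks)) = vzero" using assms(1) v(2) by (simp add: xsum_insert)
  then have "v = xsum_list ks" using assms(3) by (simp add: vxor_eq_vzero_iff xsum_list_eq_xsum_set)
  with V show ?thesis by simp
qed

lemma card_distinct_lists_Suc_card:
  assumes "card V = Suc r"
  shows "card {ks. length ks = r \<and> distinct ks \<and> set ks \<subseteq> V} = fact (Suc r)"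
proof -
  have "card {ks. length ks = r \<and> distinct ks \<and> set ks \<subseteq> V} = \<Prod>{Suc 1..Suc r}"
    using card_lists_distinct_length_eq'[of r V] assms by simp
  also have "\<dots> = \<Prod>{1..Suc r}"
    using prod.atLeast_Suc_atMost[of 1 "Suc r" id] by simp
  finally show ?thesis by (simp add: fact_prod)
qed

definition xor_lists :: "nat \<Rightarrow> nat \<Rightarrow> nat \<Rightarrow> (nat \<Rightarrow> nat) list set" where
  "xor_lists s N r = {ks. length ks = r \<and> set ks \<subseteq> Q s N \<and> xsum_list ks \<in> Q s N}"

lemma finite_xor_lists: "finite (xor_lists s N r)"
proof (rule finite_subset)
  show "xor_lists s N r \<subseteq> {ks. set ks \<subseteq> Q s N \<and> length ks = r}"
    by (auto simp: xor_lists_def)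
qed (rule finite_lists_length_eq[OF finite_Q])

lemma card_xor_lists:
  "real (card (xor_lists s N r)) = prob_xor_in_Q s N r * real (card (Q s N)) ^ r"
proof (cases "Q s N = {}")
  case True
  then have "xor_lists s N r = {}" by (simp add: xor_lists_def)
  then show ?thesis by (simp add: prob_xor_in_Q_def xor_lists_def[symmetric])
next
  case False
  then show ?thesis using finite_Q by (simp add: prob_xor_in_Q_def xor_lists_def)
qed

lemma Istar_r_subset_Q: "V \<in> Istar_r s N r \<Longrightarrow> V \<subseteq> Q s N"
  by (simp add: Istar_r_def Istar_def Idep_def)

lemma finite_Istar_r: "finite (Istar_r s N r)"
proof (rule finite_subset)
  show "Istar_r s N r \<subseteq> Pow (Q s N)" using Istar_r_subset_Q by blast
qed (simp add: finite_Q)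

lemma Istar_r_eq_insert_xsum_list:
  assumes "V \<in> Istar_r s N (Suc r)" and "length ks = r" and "distinct ks" and "set ks \<subseteq> V"
  shows "V = insert (xsum_list ks) (set ks)"
proof (rule eq_insert_xsum_list_if_xsum_eq_vzero)
  show "xsum V = vzero" "card V = Suc (length ks)"
    using assms(1,2) by (auto simp: Istar_r_def intro: Istar_xsum_eq_vzero)
  show "finite V" using Istar_r_subset_Q[OF assms(1)] finite_Q by (rule finite_subset)
qed (use assms in simp_all)

lemma card_Istar_r_mult_fact_le:
  "card (Istar_r s N (Suc r)) * fact (Suc r) \<le> card (xor_lists s N r)"
proof -
  let ?I = "Istar_r s N (Suc r)"
  let ?D = "\<lambda>V. {ks. length ks = r \<and> distinct ks \<and> set ks \<subseteq> V}"
  have finite_D: "finite (?D V)" if "V \<in> ?I" for V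
    using finite_lists_length_eq[OF finite_subset[OF Istar_r_subset_Q[OF that] finite_Q], of r]
    by (rule finite_subset[rotated]) auto
  have "card ?I * fact (Suc r) = (\<Sum>V\<in>?I. card (?D V))"
    by (simp add: card_distinct_lists_Suc_card Istar_r_def)
  also have "\<dots> = card (SIGMA V:?I. ?D V)"
    using finite_Istar_r finite_D by (intro card_SigmaI[symmetric]) auto
  also have "\<dots> \<le> card (xor_lists s N r)"
  proof (rule card_inj_on_le)
    show "inj_on snd (SIGMA V:?I. ?D V)"
    proof (rule inj_on_inverseI[where g = "\<lambda>ks. (insert (xsum_list ks) (set ks), ks)"])
      fix x
      assume "x \<in> (SIGMA V:?I. ?D V)"
      then obtain V ks where "x = (V, ks)" "V \<in> ?I" "ks \<in> ?D V" by blast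
      then show "(insert (xsum_list (snd x)) (set (snd x)), snd x) = x"
        using Istar_r_eq_insert_xsum_list[of V s N r ks] by simp
    qed
    show "snd ` (SIGMA V:?I. ?D V) \<subseteq> xor_lists s N r"
    proof
      fix ks
      assume "ks \<in> snd ` (SIGMA V:?I. ?D V)"
      then obtain V where V: "V \<in> ?I" and ks: "ks \<in> ?D V" by force
      then have "insert (xsum_list ks) (set ks) \<subseteq> Q s N"
        using Istar_r_eq_insert_xsum_list[of V s N r ks] Istar_r_subset_Q[OF V] by simp
      with ks show "ks \<in> xor_lists s N r" by (simp add: xor_lists_def)
    qed
  qed (rule finite_xor_lists)
  finally show ?thesis .
qed

theorem lemma6:
  fixes s N r :: nat and A B :: real
  assumes "N \<ge> 1" and "A > 0" and "B > 0"
    and hyp: "\<And>N' r'. N' \<ge> 1 \<Longrightarrow> r' \<ge> 2 \<Longrightarrow>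
       prob_xor_in_Q s N' r' \<le> A ^ r' * real N' powr (real r' / 4) * real r' powr (- B * sqrt (real N'))"
    and "r \<ge> 2"
  shows "real (card (Istar_r s N (r + 1)))
           \<le> real (card (Q s N)) ^ r / fact (r + 1) * A ^ r * real N powr (real r / 4)
              * real r powr (- B * sqrt (real N))"
proof -
  let ?bound = "A ^ r * real N powr (real r / 4) * real r powr (- B * sqrt (real N))"
  have "real (card (Istar_r s N (r + 1))) * fact (r + 1) \<le> real (card (xor_lists s N r))"
    using of_nat_mono[OF card_Istar_r_mult_fact_le[of s N r]]
    by (simp only: of_nat_mult of_nat_fact Suc_eq_plus1)
  also have "\<dots> = prob_xor_in_Q s N r * real (card (Q s N)) ^ r"
    by (rule card_xor_lists)
  also have "\<dots> \<le> ?bound * real (card (Q s N)) ^ r"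
    using hyp[OF \<open>N \<ge> 1\<close> \<open>r \<ge> 2\<close>] by (rule mult_right_mono) simp
  finally have
    "real (card (Istar_r s N (r + 1))) \<le> ?bound * real (card (Q s N)) ^ r / fact (r + 1)"
    by (simp add: pos_le_divide_eq)
  then show ?thesis by (simp add: mult_ac)
qed

end
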